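(* Let $\rho$ be a state of $n$ qubits, $r\ge0$ an integer, $\eta\in(0,1]$. Define $$W_r^*=\inf\Big\{\beta^{-1}\sum_{i\in\mathcal W}\log\operatorname{tr}(\Gamma_i)\ :\ \mathcal W\subseteq\{1,\dots,n\},\ \mathcal E_1,\dots,\mathcal E_r\in\mathcal T,\ \langle0^n|\mathcal E(\rho)|0^n\rangle\ge\eta\Big\},$$ where $\mathcal E=\big(\prod_{i\in\mathcal W}R_i\big)\circ\mathcal E_r\circ\cdots\circ\mathcal E_1$. Then $\beta W_r^*=-D^{r,\eta}_h(\rho\|\Gamma)$, and consequently $$-D^{r,\eta}_H(\rho\|\Gamma)-\log(1/\eta)\le\beta W_r^*\le-D^{r,\eta}_H(\rho\|\Gamma).$$
   Context: All logarithms are natural. Consider $n$ qubits; qubit $i$ has Hamiltonian $H_i$ with $H_i|0\rangle=0$, $H_i|1\rangle=E_i|1\rangle$, $E_i\ge0$. Fix $\beta>0$, and let $\Gamma_i=e^{-\beta H_i}$, $\Gamma=\bigotimes_{i=1}^n\Gamma_i$. Let $\mathcal T$ be a set of completely positive trace-preserving maps on the $n$ qubits, containing the identity map, such that $\mathcal F(\Gamma)=\Gamma$ for every $\mathcal F\in\mathcal T$. $R_i$ denotes the reset of qubit $i$: $R_i(X)=|0\rangle\langle0|_i\otimes\operatorname{tr}_i(X)$. Let $\mathcal P_0=\{\bigotimes_{i=1}^n Q_i: Q_i\in\{|0\rangle\langle0|,\mathbb 1_2\}\}$ and $\mathcal M^r=\{\mathcal E_1^\dagger\cdots\mathcal E_r^\dagger(P):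 P\in\mathcal P_0,\ \mathcal E_j\in\mathcal T\}$ (Hilbert–Schmidt adjoints). For a state $\rho$ and positive semidefinite $\Gamma$: the reduced complexity relative entropy is $D^{r,\eta}_h(\rho\|\Gamma)=-\log\inf\{\operatorname{tr}(Q\Gamma): Q\in\mathcal M^r,\operatorname{tr}(Q\rho)\ge\eta\}$, and the complexity relative entropy is $D^{r,\eta}_H(\rho\|\Gamma)=-\log\inf\{\operatorname{tr}(Q\Gamma)/\operatorname{tr}(Q\rho): Q\in\mathcal M^r,\operatorname{tr}(Q\rho)\ge\eta\}$. *)

theory Defs
  imports Complex_Main "Jordan_Normal_Form.Matrix"
begin

text \<open>Operators on n qubits are complex 2^n x 2^n matrices. Computational basis index
k in {0..<2^n}; qubit i (i in {0..<n}, i.e. qubit i+1 of the paper) of basis state k is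
the bit (k div 2^i) mod 2.\<close>

definition qbit :: "nat \<Rightarrow> nat \<Rightarrow> nat" where
  "qbit i k = (k div 2 ^ i) mod 2"

definition trace :: "complex mat \<Rightarrow> complex" where
  "trace A = (\<Sum>i<dim_row A. A $$ (i, i))"

definition dagger :: "complex mat \<Rightarrow> complex mat" where
  "dagger A = mat (dim_col A) (dim_row A) (\<lambda>(i, j). cnj (A $$ (j, i)))"

definition psd :: "complex mat \<Rightarrow> bool" where
  "psd A \<longleftrightarrow> dim_row A = dim_col A \<and>
     (\<forall>v \<in> carrier_vec (dim_row A).
        let z = (\<Sum>i<dim_row A. \<Sum>j<dim_row A. cnj (v $ i) * A $$ (i, j) * v $ j)
        in Im z = 0 \<and> Re z \<ge> 0)"

definition is_state :: "nat \<Rightarrow> complex mat \<Rightarrow> bool" where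
  "is_state n \<rho> \<longleftrightarrow> \<rho> \<in> carrier_mat (2^n) (2^n) \<and> psd \<rho> \<and> trace \<rho> = 1"

definition tensor_qubits :: "nat \<Rightarrow> (nat \<Rightarrow> complex mat) \<Rightarrow> complex mat" where
  "tensor_qubits n Q = mat (2^n) (2^n) (\<lambda>(k, l). \<Prod>i<n. Q i $$ (qbit i k, qbit i l))"

definition proj0 :: "complex mat" where
  "proj0 = mat 2 2 (\<lambda>(a, b). if a = 0 \<and> b = 0 then 1 else 0)"

text \<open>Gamma_i = exp(-beta H_i) with H_i = diag(0, E_i) (diagonal, so the exponential is
entrywise on the diagonal).\<close>
definition gamma_q :: "real \<Rightarrow> real \<Rightarrow> complex mat" where
  "gamma_q \<beta> Ei = mat 2 2 (\<lambda>(a, b). if a = b then (if a = 0 then 1 else complex_of_real (exp (- \<beta> * Ei))) else 0)"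

definition Gamma :: "nat \<Rightarrow> real \<Rightarrow> (nat \<Rightarrow> real) \<Rightarrow> complex mat" where
  "Gamma n \<beta> E = tensor_qubits n (\<lambda>i. gamma_q \<beta> (E i))"

text \<open>Linear maps on d x d matrices and complete positivity: (id_m \<otimes> F) maps PSD
matrices on C^m \<otimes> C^d to PSD matrices, for every m.\<close>
definition ampl :: "nat \<Rightarrow> nat \<Rightarrow> (complex mat \<Rightarrow> complex mat) \<Rightarrow> complex mat \<Rightarrow> complex mat" where
  "ampl m d F X = mat (m * d) (m * d) (\<lambda>(p, q).
      F (mat d d (\<lambda>(k, l). X $$ ((p div d) * d + k, (q div d) * d + l))) $$ (p mod d, q mod d))"

definition cptp :: "nat \<Rightarrow> (complex mat \<Rightarrow> complex mat) \<Rightarrow> bool" where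
  "cptp n F \<longleftrightarrow>
     (\<forall>X \<in> carrier_mat (2^n) (2^n). F X \<in> carrier_mat (2^n) (2^n)) \<and>
     (\<forall>X \<in> carrier_mat (2^n) (2^n). \<forall>Y \<in> carrier_mat (2^n) (2^n). F (X + Y) = F X + F Y) \<and>
     (\<forall>X \<in> carrier_mat (2^n) (2^n). \<forall>c. F (c \<cdot>\<^sub>m X) = c \<cdot>\<^sub>m F X) \<and>
     (\<forall>X \<in> carrier_mat (2^n) (2^n). trace (F X) = trace X) \<and>
     (\<forall>m. \<forall>X \<in> carrier_mat (m * 2^n) (m * 2^n). psd X \<longrightarrow> psd (ampl m (2^n) F X))"

definition hs_adjoint :: "nat \<Rightarrow> (complex mat \<Rightarrow> complex mat) \<Rightarrow> complex mat \<Rightarrow> complex mat" where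
  "hs_adjoint n F Y = (THE Z. Z \<in> carrier_mat (2^n) (2^n) \<and>
      (\<forall>X \<in> carrier_mat (2^n) (2^n). trace (dagger Z * X) = trace (dagger Y * F X)))"

text \<open>chain Es r = E_r o ... o E_1 where E_(j+1) = Es j.\<close>
fun chain :: "(nat \<Rightarrow> 'a \<Rightarrow> 'a) \<Rightarrow> nat \<Rightarrow> 'a \<Rightarrow> 'a" where
  "chain Es 0 = id"
| "chain Es (Suc j) = Es j \<circ> chain Es j"

text \<open>adj_chain n Es r = E_1^dagger o ... o E_r^dagger.\<close>
fun adj_chain :: "nat \<Rightarrow> (nat \<Rightarrow> complex mat \<Rightarrow> complex mat) \<Rightarrow> nat \<Rightarrow> complex mat \<Rightarrow> complex mat" where
  "adj_chain n Es 0 = id"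
| "adj_chain n Es (Suc j) = adj_chain n Es j \<circ> hs_adjoint n (Es j)"

text \<open>Reset of qubit i: R_i(X) = |0><0|_i \<otimes> tr_i(X), written out entrywise.\<close>
definition reset :: "nat \<Rightarrow> nat \<Rightarrow> complex mat \<Rightarrow> complex mat" where
  "reset n i X = mat (2^n) (2^n) (\<lambda>(k, l).
     if qbit i k = 0 \<and> qbit i l = 0 then X $$ (k, l) + X $$ (k + 2^i, l + 2^i) else 0)"

text \<open>Product of the resets R_i over i in W (they commute).\<close>
definition resets :: "nat \<Rightarrow> nat set \<Rightarrow> complex mat \<Rightarrow> complex mat" where
  "resets n W = foldr (\<lambda>i f. reset n i \<circ> f) (sorted_list_of_set W) id"

definition P0 :: "nat \<Rightarrow> complex mat set" where
  "P0 n = {tensor_qubits n Q | Q. \<forall>i<n. Q i = proj0 \<or> Q i = 1\<^sub>m 2}"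

definition Mr :: "nat \<Rightarrow> (complex mat \<Rightarrow> complex mat) set \<Rightarrow> nat \<Rightarrow> complex mat set" where
  "Mr n T r = {adj_chain n Es r P | Es P. (\<forall>j<r. Es j \<in> T) \<and> P \<in> P0 n}"

definition D_h :: "nat \<Rightarrow> (complex mat \<Rightarrow> complex mat) set \<Rightarrow> nat \<Rightarrow> real \<Rightarrow> complex mat \<Rightarrow> complex mat \<Rightarrow> real" where
  "D_h n T r \<eta> \<rho> G = - ln (Inf {Re (trace (Q * G)) | Q. Q \<in> Mr n T r \<and> Re (trace (Q * \<rho>)) \<ge> \<eta>})"

definition D_H :: "nat \<Rightarrow> (complex mat \<Rightarrow> complex mat) set \<Rightarrow> nat \<Rightarrow> real \<Rightarrow> complex mat \<Rightarrow> complex mat \<Rightarrow> real" where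
  "D_H n T r \<eta> \<rho> G = - ln (Inf {Re (trace (Q * G)) / Re (trace (Q * \<rho>)) | Q. Q \<in> Mr n T r \<and> Re (trace (Q * \<rho>)) \<ge> \<eta>})"

definition W_star :: "nat \<Rightarrow> real \<Rightarrow> (nat \<Rightarrow> real) \<Rightarrow> (complex mat \<Rightarrow> complex mat) set \<Rightarrow> nat \<Rightarrow> real \<Rightarrow> complex mat \<Rightarrow> real" where
  "W_star n \<beta> E T r \<eta> \<rho> = Inf {(1 / \<beta>) * (\<Sum>i\<in>W. ln (Re (trace (gamma_q \<beta> (E i))))) | W Es.
      W \<subseteq> {..<n} \<and> (\<forall>j<r. Es j \<in> T) \<and> Re ((resets n W \<circ> chain Es r) \<rho> $$ (0, 0)) \<ge> \<eta>}"

end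

theory Submission
  imports Defs
begin

text \<open>Every element of P0 is the projector P_W (proj_off n W) acting as the identity on the qubits of a set W
and as the projector onto |0> on all other qubits. Since the maps in T fix Gamma and both Gamma
and P_W are diagonal, Q = E_1^dagger ... E_r^dagger (P_W) satisfies tr(Q Gamma) = tr(P_W Gamma),
the product of the tr(Gamma_i) over i in W, while tr(Q rho) = tr(P_W E(rho)) is the all-zero
entry of (prod_{i in W} R_i) E(rho), because resetting the qubits of W and then reading off
that entry traces them out. Hence the three optimisation problems range over the same feasible
pairs (W, E): the objective of D_h is exp(beta w) for the work w of the pair, which gives
beta W* = -D_h, and the objective of D_H is exp(beta w) / p with a success probability
eta <= p <= 1, which gives the two-sided bound.\<close>

subsection \<open>Bits of basis indices\<close>

lemma qbit_eq_of_bool_bit: "qbit i k = of_bool (bit k i)"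
  by (simp add: qbit_def bit_iff_odd odd_iff_mod_2_eq_one even_iff_mod_2_eq_zero)

lemma qbit_less_2: "qbit i k < 2"
  by (simp add: qbit_def)

lemma qbit_add_pow2:
  assumes "qbit i k = 0"
  shows "qbit i (k + 2^i) = 1" and "j \<noteq> i \<Longrightarrow> qbit j (k + 2^i) = qbit j k"
proof -
  have "\<not> bit k i" using assms by (simp add: qbit_eq_of_bool_bit)
  then have set: "k + 2^i = set_bit i k" using set_bit_eq[of i k] by simp
  show "qbit i (k + 2^i) = 1"
    unfolding set qbit_eq_of_bool_bit by (simp add: bit_set_bit_iff)
  show "j \<noteq> i \<Longrightarrow> qbit j (k + 2^i) = qbit j k"
    unfolding set qbit_eq_of_bool_bit by (auto simp add: bit_set_bit_iff)
qed

lemma qbit_eq_0_if_less_pow2: "k < 2^n \<Longrightarrow> n \<le> i \<Longrightarrow> qbit i k = 0"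
proof -
  assume "k < 2^n" "n \<le> i"
  then have "k < 2^i" using power_increasing[of n i "2::nat"] by linarith
  then show ?thesis by (simp add: qbit_def)
qed

lemma qbit_inject:
  assumes "k < 2^n" "l < 2^n" "\<forall>i<n. qbit i k = qbit i l"
  shows "k = l"
proof (rule bit_eqI)
  fix i show "bit k i = bit l i"
  proof (cases "i < n")
    case True
    then have "qbit i k = qbit i l" using assms(3) by simp
    then show ?thesis by (cases "bit k i"; cases "bit l i") (auto simp: qbit_eq_of_bool_bit)
  next
    case False
    then show ?thesis
      using qbit_eq_0_if_less_pow2[OF assms(1)] qbit_eq_0_if_less_pow2[OF assms(2)]
      by (auto simp: qbit_eq_of_bool_bit)
  qed
qed

lemma add_pow2_less_pow2:
  assumes "k < 2^n" "i < n" "qbit i k = 0"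
  shows "k + 2^i < 2^n"
proof -
  have "\<not> bit k i" using assms by (simp add: qbit_eq_of_bool_bit)
  then have set: "k + 2^i = set_bit i k" using set_bit_eq[of i k] by simp
  have high: "n \<le> j \<Longrightarrow> \<not> bit k j" for j
    using qbit_eq_0_if_less_pow2[OF assms(1), of j] by (simp add: qbit_eq_of_bool_bit)
  have "take_bit n (set_bit i k) = set_bit i k"
  proof (rule bit_eqI)
    fix j show "bit (take_bit n (set_bit i k)) j = bit (set_bit i k) j"
      using high[of j] assms(2) by (cases "n \<le> j") (auto simp: bit_take_bit_iff bit_set_bit_iff)
  qed
  then show ?thesis unfolding set by (metis take_bit_nat_less_exp)
qed

lemma sum_prod_qbits:
  fixes f :: "nat \<Rightarrow> nat \<Rightarrow> 'a::comm_semiring_1"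
  shows "(\<Sum>k<2^n. \<Prod>i<n. f i (qbit i k)) = (\<Prod>i<n. f i 0 + f i 1)"
proof (induction n)
  case 0
  then show ?case by simp
next
  case (Suc n)
  let ?low = "{..<(2::nat)^n}" and ?high = "(\<lambda>k. k + 2^n) ` {..<2^n}"
  have split: "{..<2^Suc n} = ?low \<union> ?high"
  proof
    show "{..<2^Suc n} \<subseteq> ?low \<union> ?high"
    proof
      fix k assume "k \<in> {..<(2::nat)^Suc n}"
      then show "k \<in> ?low \<union> ?high"
        by (cases "k < 2^n") (auto simp: image_iff intro!: bexI[of _ "k - 2^n"])
    qed
  qed auto
  have low: "(\<Prod>i<Suc n. f i (qbit i k)) = f n 0 * (\<Prod>i<n. f i (qbit i k))" if "k < 2^n" for k
    using qbit_eq_0_if_less_pow2[OF that, of n] by (simp add: mult.commute)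
  have high: "(\<Prod>i<Suc n. f i (qbit i (k + 2^n))) = f n 1 * (\<Prod>i<n. f i (qbit i k))"
    if "k < 2^n" for k
  proof -
    have zero: "qbit n k = 0" using qbit_eq_0_if_less_pow2[OF that] by simp
    have "(\<Prod>i<n. f i (qbit i (k + 2^n))) = (\<Prod>i<n. f i (qbit i k))"
      by (rule prod.cong) (auto simp: qbit_add_pow2(2)[OF zero])
    then show ?thesis using qbit_add_pow2(1)[OF zero] by (simp add: mult.commute)
  qed
  have "(\<Sum>k<2^Suc n. \<Prod>i<Suc n. f i (qbit i k))
      = (\<Sum>k\<in>?low. \<Prod>i<Suc n. f i (qbit i k)) + (\<Sum>k\<in>?high. \<Prod>i<Suc n. f i (qbit i k))"
    unfolding split by (rule sum.union_disjoint) auto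
  also have "(\<Sum>k\<in>?high. \<Prod>i<Suc n. f i (qbit i k)) = (\<Sum>k\<in>?low. \<Prod>i<Suc n. f i (qbit i (k + 2^n)))"
    by (subst sum.reindex) (auto simp: inj_on_def)
  also have "\<dots> = (\<Sum>k\<in>?low. f n 1 * (\<Prod>i<n. f i (qbit i k)))"
    by (intro sum.cong refl) (rule high, simp)
  also have "(\<Sum>k\<in>?low. \<Prod>i<Suc n. f i (qbit i k)) = (\<Sum>k\<in>?low. f n 0 * (\<Prod>i<n. f i (qbit i k)))"
    by (intro sum.cong refl) (rule low, simp)
  finally show ?case using Suc by (simp add: sum_distrib_left[symmetric] algebra_simps)
qed

lemma prod_of_bool:
  "finite A \<Longrightarrow> (\<Prod>x\<in>A. of_bool (P x) :: 'a::comm_semiring_1) = of_bool (\<forall>x\<in>A. P x)"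
  by (induction A rule: finite_induct) auto

subsection \<open>Diagonal product operators\<close>

lemma tensor_qubits_diag:
  assumes "\<forall>i<n. \<forall>a<2. \<forall>b<2. a \<noteq> b \<longrightarrow> Q i $$ (a, b) = 0" "k < 2^n" "l < 2^n"
  shows "tensor_qubits n Q $$ (k, l) = (if k = l then (\<Prod>i<n. Q i $$ (qbit i k, qbit i k)) else 0)"
proof (cases "k = l")
  case True
  then show ?thesis using assms by (simp add: tensor_qubits_def)
next
  case False
  then obtain i where i: "i < n" "qbit i k \<noteq> qbit i l" using qbit_inject[OF assms(2,3)] by blast
  then have "Q i $$ (qbit i k, qbit i l) = 0" using assms(1) qbit_less_2 by blast
  then have "(\<Prod>i<n. Q i $$ (qbit i k, qbit i l)) = 0" using i by (intro prod_zero) auto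
  then show ?thesis using False assms by (simp add: tensor_qubits_def)
qed

lemma trace_diag_mult:
  assumes "A \<in> carrier_mat d d" "X \<in> carrier_mat d d"
    and "\<And>k l. k < d \<Longrightarrow> l < d \<Longrightarrow> A $$ (k, l) = (if k = l then c k else 0)"
  shows "trace (A * X) = (\<Sum>k<d. c k * X $$ (k, k))"
proof -
  have "trace (A * X) = (\<Sum>k<d. \<Sum>j<d. A $$ (k, j) * X $$ (j, k))"
    using assms(1,2) by (simp add: trace_def scalar_prod_def lessThan_atLeast0)
  also have "\<dots> = (\<Sum>k<d. \<Sum>j<d. (if j = k then c k * X $$ (k, k) else 0))"
    by (intro sum.cong refl) (auto simp: assms(3))
  finally show ?thesis by simp
qed

definition proj_off :: "nat \<Rightarrow> nat set \<Rightarrow> complex mat" where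
  "proj_off n W = tensor_qubits n (\<lambda>i. if i \<in> W then 1\<^sub>m 2 else proj0)"

lemma proj_off_carrier: "proj_off n W \<in> carrier_mat (2^n) (2^n)"
  by (simp add: proj_off_def tensor_qubits_def)

lemma proj_off_index:
  assumes "k < 2^n" "l < 2^n"
  shows "proj_off n W $$ (k, l) = of_bool (k = l \<and> (\<forall>i<n. i \<in> W \<or> qbit i k = 0))"
proof -
  have "proj_off n W $$ (k, l)
      = (if k = l then (\<Prod>i<n. (if i \<in> W then 1\<^sub>m 2 else proj0) $$ (qbit i k, qbit i k)) else 0)"
    unfolding proj_off_def by (rule tensor_qubits_diag[OF _ assms]) (auto simp: proj0_def)
  also have "\<dots> = (if k = l then (\<Prod>i<n. of_bool (i \<in> W \<or> qbit i k = 0)) else 0)"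
    by (auto intro!: prod.cong simp: proj0_def qbit_less_2)
  finally show ?thesis by (simp add: prod_of_bool Ball_def)
qed

lemma proj_off_dagger: "dagger (proj_off n W) = proj_off n W"
  by (rule eq_matI) (auto simp: dagger_def proj_off_index proj_off_carrier[THEN carrier_matD(1)]
      proj_off_carrier[THEN carrier_matD(2)])

lemma trace_proj_off_mult:
  assumes "X \<in> carrier_mat (2^n) (2^n)"
  shows "trace (proj_off n W * X) = (\<Sum>k<2^n. of_bool (\<forall>i<n. i \<in> W \<or> qbit i k = 0) * X $$ (k, k))"
  by (rule trace_diag_mult[OF proj_off_carrier assms]) (simp add: proj_off_index)

lemma P0_eq_proj_off: "P0 n = proj_off n ` Pow {..<n}"
proof (intro equalityI subsetI)
  fix P assume "P \<in> P0 n"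
  then obtain Q where P: "P = tensor_qubits n Q" and Q: "\<forall>i<n. Q i = proj0 \<or> Q i = 1\<^sub>m 2"
    unfolding P0_def by blast
  define W where "W = {i. i < n \<and> Q i = 1\<^sub>m 2}"
  have "P = proj_off n W"
    unfolding P proj_off_def tensor_qubits_def W_def using Q
    by (intro eq_matI) (auto intro!: prod.cong)
  then show "P \<in> proj_off n ` Pow {..<n}" unfolding W_def by blast
next
  fix P assume "P \<in> proj_off n ` Pow {..<n}"
  then obtain W where "P = proj_off n W" by blast
  then show "P \<in> P0 n"
    unfolding P0_def proj_off_def by (intro CollectI exI[of _ "\<lambda>i. if i \<in> W then 1\<^sub>m 2 else proj0"]) auto
qed

lemma trace_gamma_q: "trace (gamma_q \<beta> Ei) = complex_of_real (1 + exp (- \<beta> * Ei))"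
  by (simp add: trace_def gamma_q_def numeral_2_eq_2)

lemma Gamma_carrier: "Gamma n \<beta> E \<in> carrier_mat (2^n) (2^n)"
  by (simp add: Gamma_def tensor_qubits_def)

lemma Gamma_index:
  assumes "k < 2^n" "l < 2^n"
  shows "Gamma n \<beta> E $$ (k, l)
    = (if k = l then (\<Prod>i<n. gamma_q \<beta> (E i) $$ (qbit i k, qbit i k)) else 0)"
  unfolding Gamma_def by (rule tensor_qubits_diag[OF _ assms]) (auto simp: gamma_q_def)

lemma Gamma_hermitian:
  "k < 2^n \<Longrightarrow> l < 2^n \<Longrightarrow> Gamma n \<beta> E $$ (k, l) = cnj (Gamma n \<beta> E $$ (l, k))"
  by (auto simp: Gamma_index cnj_prod gamma_q_def qbit_less_2 intro!: prod.cong)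

lemma trace_proj_off_Gamma:
  assumes "W \<subseteq> {..<n}"
  shows "trace (proj_off n W * Gamma n \<beta> E) = complex_of_real (\<Prod>i\<in>W. 1 + exp (- \<beta> * E i))"
proof -
  let ?f = "\<lambda>i b. of_bool (i \<in> W \<or> b = 0) * gamma_q \<beta> (E i) $$ (b, b)"
  have "trace (proj_off n W * Gamma n \<beta> E) = (\<Sum>k<2^n. \<Prod>i<n. ?f i (qbit i k))"
    by (simp add: trace_proj_off_mult[OF Gamma_carrier] Gamma_index prod.distrib prod_of_bool
        Ball_def del: sum_of_bool_mult_eq)
  also have "\<dots> = (\<Prod>i<n. ?f i 0 + ?f i 1)"
    by (rule sum_prod_qbits)
  also have "\<dots> = (\<Prod>i<n. if i \<in> W then complex_of_real (1 + exp (- \<beta> * E i)) else 1)"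
    by (intro prod.cong refl) (simp add: gamma_q_def)
  also have "\<dots> = (\<Prod>i\<in>W. complex_of_real (1 + exp (- \<beta> * E i)))"
    using assms by (simp add: prod.If_cases Int_absorb1)
  finally show ?thesis by simp
qed

subsection \<open>Resets\<close>

definition agree_off :: "nat \<Rightarrow> nat set \<Rightarrow> nat \<Rightarrow> nat \<Rightarrow> bool" where
  "agree_off n A k k' \<longleftrightarrow> (\<forall>i<n. i \<in> A \<or> qbit i k' = qbit i k)"

lemma agree_off_empty: "k < 2^n \<Longrightarrow> k' < 2^n \<Longrightarrow> agree_off n {} k k' \<longleftrightarrow> k' = k"
  using qbit_inject[of k' n k] by (auto simp: agree_off_def)

text \<open>Flipping bit i of k, which is clear, sweeps out the other half of the indices that agree
with k off \<open>insert i A\<close>.\<close>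

lemma agree_off_insert:
  assumes "i < n" "i \<notin> A" "qbit i k = 0"
  shows "(of_bool (agree_off n A k k') :: 'a::semiring_1) + of_bool (agree_off n A (k + 2^i) k')
    = of_bool (agree_off n (insert i A) k k')"
proof -
  note flip = qbit_add_pow2[OF assms(3)]
  have iff: "agree_off n (insert i A) k k' \<longleftrightarrow> agree_off n A k k' \<or> agree_off n A (k + 2^i) k'"
  proof
    assume agree: "agree_off n (insert i A) k k'"
    show "agree_off n A k k' \<or> agree_off n A (k + 2^i) k'"
    proof (cases "qbit i k' = 0")
      case True
      then show ?thesis using agree assms(3) by (auto simp: agree_off_def)
    next
      case False
      then have "qbit i k' = 1" using qbit_less_2[of i k'] by linarith
      then have "qbit j k' = qbit j (k + 2^i)" if "j < n" "j \<notin> A" for j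
        using agree that flip by (cases "j = i") (auto simp: agree_off_def)
      then show ?thesis by (auto simp: agree_off_def)
    qed
  qed (use flip in \<open>auto simp: agree_off_def\<close>)
  have "\<not> (agree_off n A k k' \<and> agree_off n A (k + 2^i) k')"
  proof
    assume "agree_off n A k k' \<and> agree_off n A (k + 2^i) k'"
    then have "qbit i k' = qbit i k" "qbit i k' = qbit i (k + 2^i)"
      using assms(1,2) by (auto simp: agree_off_def)
    then show False using assms(3) flip(1) by simp
  qed
  then show ?thesis unfolding iff by auto
qed

lemma foldr_reset_diag:
  assumes "distinct L" "set L \<subseteq> {..<n}" "k < 2^n" "\<forall>j\<in>set L. qbit j k = 0"
  shows "foldr (\<lambda>i f. reset n i \<circ> f) L id X $$ (k, k)
    = (\<Sum>k'<2^n. of_bool (agree_off n (set L) k k') * X $$ (k', k'))"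
  using assms
proof (induction L arbitrary: k)
  case Nil
  then have "(\<Sum>k'<2^n. of_bool (agree_off n {} k k') * X $$ (k', k'))
      = (\<Sum>k'<2^n. if k' = k then X $$ (k, k) else 0)"
    by (intro sum.cong refl) (simp add: agree_off_empty)
  then show ?case using Nil by simp
next
  case (Cons i L)
  let ?R = "foldr (\<lambda>i f. reset n i \<circ> f) L id X"
  have i: "i < n" "i \<notin> set L" "qbit i k = 0" using Cons.prems by auto
  have flipped: "k + 2^i < 2^n" using add_pow2_less_pow2[OF Cons.prems(3) i(1,3)] .
  have "qbit j (k + 2^i) = 0" if "j \<in> set L" for j
    using that i(2) Cons.prems(4) qbit_add_pow2(2)[OF i(3), of j] by (cases "j = i") auto
  have "foldr (\<lambda>i f. reset n i \<circ> f) (i # L) id X $$ (k, k) = ?R $$ (k, k) + ?R $$ (k + 2^i, k + 2^i)"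
    using Cons.prems i by (simp add: reset_def)
  also have "\<dots> = (\<Sum>k'<2^n. (of_bool (agree_off n (set L) k k') + of_bool (agree_off n (set L) (k + 2^i) k'))
      * X $$ (k', k'))"
    using Cons.prems i flipped \<open>\<And>j. j \<in> set L \<Longrightarrow> qbit j (k + 2^i) = 0\<close>
    by (subst (1 2) Cons.IH) (auto simp: sum.distrib algebra_simps)
  also have "\<dots> = (\<Sum>k'<2^n. of_bool (agree_off n (set (i # L)) k k') * X $$ (k', k'))"
    by (simp only: agree_off_insert[OF i] list.set(2))
  finally show ?case .
qed

lemma resets_00_eq_trace:
  assumes "W \<subseteq> {..<n}" "X \<in> carrier_mat (2^n) (2^n)"
  shows "resets n W X $$ (0, 0) = trace (proj_off n W * X)"
proof -
  have "finite W" using assms(1) finite_subset by blast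
  then have "resets n W X $$ (0, 0) = (\<Sum>k'<2^n. of_bool (agree_off n W 0 k') * X $$ (k', k'))"
    unfolding resets_def using assms(1) by (subst foldr_reset_diag) (auto simp: qbit_def)
  then show ?thesis
    unfolding trace_proj_off_mult[OF assms(2)] by (simp add: agree_off_def qbit_def del: sum_of_bool_mult_eq)
qed

subsection \<open>Traces and Hilbert--Schmidt adjoints\<close>

lemma trace_add: "A \<in> carrier_mat d d \<Longrightarrow> B \<in> carrier_mat d d \<Longrightarrow> trace (A + B) = trace A + trace B"
  by (simp add: trace_def sum.distrib)

lemma trace_smult: "A \<in> carrier_mat d d \<Longrightarrow> trace (c \<cdot>\<^sub>m A) = c * trace A"
  by (simp add: trace_def sum_distrib_left)

lemma trace_dagger_mult:
  assumes "Z \<in> carrier_mat d d" "X \<in> carrier_mat d d"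
  shows "trace (dagger Z * X) = (\<Sum>p\<in>{..<d} \<times> {..<d}. cnj (Z $$ p) * X $$ p)"
proof -
  have "trace (dagger Z * X) = (\<Sum>i<d. \<Sum>k<d. cnj (Z $$ (k, i)) * X $$ (k, i))"
    using assms by (simp add: trace_def dagger_def scalar_prod_def lessThan_atLeast0)
  also have "\<dots> = (\<Sum>k<d. \<Sum>i<d. cnj (Z $$ (k, i)) * X $$ (k, i))"
    by (rule sum.swap)
  finally show ?thesis by (simp add: sum.cartesian_product)
qed

lemma trace_mult_hermitian:
  assumes "A \<in> carrier_mat d d" "M \<in> carrier_mat d d"
    and "\<And>i j. i < d \<Longrightarrow> j < d \<Longrightarrow> M $$ (i, j) = cnj (M $$ (j, i))"
  shows "trace (A * M) = cnj (trace (dagger A * M))"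
proof -
  have "trace (A * M) = (\<Sum>i<d. \<Sum>k<d. A $$ (i, k) * M $$ (k, i))"
    using assms(1,2) by (simp add: trace_def scalar_prod_def lessThan_atLeast0)
  also have "\<dots> = (\<Sum>i<d. \<Sum>k<d. A $$ (i, k) * cnj (M $$ (i, k)))"
  proof (intro sum.cong refl)
    fix i k assume "i \<in> {..<d}" "k \<in> {..<d}"
    then show "A $$ (i, k) * M $$ (k, i) = A $$ (i, k) * cnj (M $$ (i, k))" using assms(3)[of k i] by simp
  qed
  also have "\<dots> = cnj (\<Sum>p\<in>{..<d} \<times> {..<d}. cnj (A $$ p) * M $$ p)"
    by (simp add: sum.cartesian_product split_def)
  finally show ?thesis using trace_dagger_mult[OF assms(1,2)] by simp
qed

definition matrix_unit :: "nat \<Rightarrow> nat \<Rightarrow> nat \<Rightarrow> complex mat" where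
  "matrix_unit d a b = mat d d (\<lambda>(p, q). of_bool (p = a \<and> q = b))"

lemma matrix_unit_carrier: "matrix_unit d a b \<in> carrier_mat d d"
  by (simp add: matrix_unit_def)

definition restrict_entries :: "nat \<Rightarrow> (nat \<times> nat) set \<Rightarrow> complex mat \<Rightarrow> complex mat" where
  "restrict_entries d A X = mat d d (\<lambda>p. if p \<in> A then X $$ p else 0)"

lemma linear_functional_restrict_entries:
  assumes add: "\<And>X Y. X \<in> carrier_mat d d \<Longrightarrow> Y \<in> carrier_mat d d \<Longrightarrow> \<phi> (X + Y) = \<phi> X + \<phi> Y"
    and smult: "\<And>X c. X \<in> carrier_mat d d \<Longrightarrow> \<phi> (c \<cdot>\<^sub>m X) = c * \<phi> X"
    and "finite A"
  shows "\<phi> (restrict_entries d A X)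
    = (\<Sum>p\<in>A \<inter> ({..<d} \<times> {..<d}). X $$ p * \<phi> (matrix_unit d (fst p) (snd p)))"
  using \<open>finite A\<close>
proof (induction A rule: finite_induct)
  case empty
  have "restrict_entries d {} X = 0 \<cdot>\<^sub>m restrict_entries d {} X"
    by (rule eq_matI) (auto simp: restrict_entries_def)
  then show ?case using smult[of "restrict_entries d {} X" 0] by (simp add: restrict_entries_def)
next
  case (insert p A)
  show ?case
  proof (cases "p \<in> {..<d} \<times> {..<d}")
    case True
    have "restrict_entries d (insert p A) X
        = restrict_entries d A X + X $$ p \<cdot>\<^sub>m matrix_unit d (fst p) (snd p)"
      using insert True by (intro eq_matI) (auto simp: restrict_entries_def matrix_unit_def)
    then have "\<phi> (restrict_entries d (insert p A) X)
        = \<phi> (restrict_entries d A X) + X $$ p * \<phi> (matrix_unit d (fst p) (snd p))"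
      by (simp add: add smult restrict_entries_def matrix_unit_def)
    moreover have "insert p A \<inter> ({..<d} \<times> {..<d}) = insert p (A \<inter> ({..<d} \<times> {..<d}))"
      using True by auto
    ultimately show ?thesis using insert by (simp add: add.commute)
  next
    case False
    then have "restrict_entries d (insert p A) X = restrict_entries d A X"
      by (intro eq_matI) (auto simp: restrict_entries_def)
    moreover have "insert p A \<inter> ({..<d} \<times> {..<d}) = A \<inter> ({..<d} \<times> {..<d})"
      using False by auto
    ultimately show ?thesis using insert by simp
  qed
qed

lemma linear_functional_trace_rep:
  assumes add: "\<And>X Y. X \<in> carrier_mat d d \<Longrightarrow> Y \<in> carrier_mat d d \<Longrightarrow> \<phi> (X + Y) = \<phi> X + \<phi> Y"
    and smult: "\<And>X c. X \<in> carrier_mat d d \<Longrightarrow> \<phi> (c \<cdot>\<^sub>m X) = c * \<phi> X"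
  shows "\<exists>Z \<in> carrier_mat d d. \<forall>X \<in> carrier_mat d d. \<phi> X = trace (dagger Z * X)"
proof (intro bexI ballI)
  let ?Z = "mat d d (\<lambda>(a, b). cnj (\<phi> (matrix_unit d a b)))"
  show "?Z \<in> carrier_mat d d" by simp
  fix X :: "complex mat" assume X: "X \<in> carrier_mat d d"
  have "restrict_entries d ({..<d} \<times> {..<d}) X = X"
    using X by (intro eq_matI) (auto simp: restrict_entries_def)
  then have "\<phi> X = \<phi> (restrict_entries d ({..<d} \<times> {..<d}) X)" by simp
  also have "\<dots> = (\<Sum>p\<in>{..<d} \<times> {..<d}. X $$ p * \<phi> (matrix_unit d (fst p) (snd p)))"
    using linear_functional_restrict_entries[where d = d and \<phi> = \<phi>, OF add smult] by simp
  also have "\<dots> = (\<Sum>p\<in>{..<d} \<times> {..<d}. cnj (?Z $$ p) * X $$ p)"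
    by (intro sum.cong refl) auto
  also have "\<dots> = trace (dagger ?Z * X)"
    using X by (intro trace_dagger_mult[symmetric]) auto
  finally show "\<phi> X = trace (dagger ?Z * X)" .
qed

lemma trace_rep_unique:
  assumes "Z \<in> carrier_mat d d" "Z' \<in> carrier_mat d d"
    and "\<forall>X \<in> carrier_mat d d. trace (dagger Z * X) = trace (dagger Z' * X)"
  shows "Z = Z'"
proof (rule eq_matI)
  fix a b assume ab: "a < dim_row Z'" "b < dim_col Z'"
  have unit: "trace (dagger Y * matrix_unit d a b) = cnj (Y $$ (a, b))" if "Y \<in> carrier_mat d d" for Y
  proof -
    have "trace (dagger Y * matrix_unit d a b)
        = (\<Sum>p\<in>{..<d} \<times> {..<d}. if p = (a, b) then cnj (Y $$ (a, b)) else 0)"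
      unfolding trace_dagger_mult[OF that matrix_unit_carrier]
      by (intro sum.cong refl) (auto simp: matrix_unit_def split: if_splits)
    then show ?thesis using ab assms(2) by simp
  qed
  have "cnj (Z $$ (a, b)) = cnj (Z' $$ (a, b))"
    using unit[OF assms(1)] unit[OF assms(2)] assms(3) by (simp add: matrix_unit_def)
  then show "Z $$ (a, b) = Z' $$ (a, b)" by simp
qed (use assms in auto)

lemma hs_adjoint:
  assumes F: "cptp n F" and Y: "Y \<in> carrier_mat (2^n) (2^n)"
  shows "hs_adjoint n F Y \<in> carrier_mat (2^n) (2^n)"
    and "X \<in> carrier_mat (2^n) (2^n) \<Longrightarrow> trace (dagger (hs_adjoint n F Y) * X) = trace (dagger Y * F X)"
proof -
  let ?d = "2^n :: nat"
  have FX: "F X \<in> carrier_mat ?d ?d" if "X \<in> carrier_mat ?d ?d" for X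
    using F that by (simp add: cptp_def)
  have dY: "dagger Y \<in> carrier_mat ?d ?d" using Y by (simp add: dagger_def)
  have "\<exists>Z \<in> carrier_mat ?d ?d. \<forall>X \<in> carrier_mat ?d ?d. trace (dagger Y * F X) = trace (dagger Z * X)"
  proof (rule linear_functional_trace_rep)
    fix X X' :: "complex mat" assume X: "X \<in> carrier_mat ?d ?d" "X' \<in> carrier_mat ?d ?d"
    have "F (X + X') = F X + F X'" using F X by (simp add: cptp_def)
    moreover have "dagger Y * (F X + F X') = dagger Y * F X + dagger Y * F X'"
      using X FX dY by (intro mult_add_distrib_mat) auto
    ultimately show "trace (dagger Y * F (X + X')) = trace (dagger Y * F X) + trace (dagger Y * F X')"
      using X FX dY by (simp add: trace_add[where d = ?d])
  next
    fix X :: "complex mat" and c assume X: "X \<in> carrier_mat ?d ?d"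
    have "F (c \<cdot>\<^sub>m X) = c \<cdot>\<^sub>m F X" using F X by (simp add: cptp_def)
    moreover have "dagger Y * (c \<cdot>\<^sub>m F X) = c \<cdot>\<^sub>m (dagger Y * F X)"
      using X FX dY by (intro mult_smult_distrib) auto
    ultimately show "trace (dagger Y * F (c \<cdot>\<^sub>m X)) = c * trace (dagger Y * F X)"
      using X FX dY by (simp add: trace_smult[where d = ?d])
  qed
  then obtain Z where Z: "Z \<in> carrier_mat ?d ?d"
    "\<forall>X \<in> carrier_mat ?d ?d. trace (dagger Z * X) = trace (dagger Y * F X)"
    by auto
  have "\<exists>!Z. Z \<in> carrier_mat ?d ?d \<and> (\<forall>X \<in> carrier_mat ?d ?d. trace (dagger Z * X) = trace (dagger Y * F X))"
    using Z by (intro ex1I[of _ Z]) (auto intro: trace_rep_unique[where d = ?d])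
  then have "hs_adjoint n F Y \<in> carrier_mat ?d ?d \<and>
      (\<forall>X \<in> carrier_mat ?d ?d. trace (dagger (hs_adjoint n F Y) * X) = trace (dagger Y * F X))"
    unfolding hs_adjoint_def by (rule theI')
  then show "hs_adjoint n F Y \<in> carrier_mat ?d ?d"
    and "X \<in> carrier_mat ?d ?d \<Longrightarrow> trace (dagger (hs_adjoint n F Y) * X) = trace (dagger Y * F X)"
    by auto
qed

subsection \<open>Positive semidefinite matrices and channels\<close>

definition quad_form :: "complex mat \<Rightarrow> complex vec \<Rightarrow> complex" where
  "quad_form A v = (\<Sum>i<dim_row A. \<Sum>j<dim_row A. cnj (v $ i) * A $$ (i, j) * v $ j)"

lemma psd_quad_form:
  "psd A \<Longrightarrow> v \<in> carrier_vec (dim_row A) \<Longrightarrow> Im (quad_form A v) = 0 \<and> Re (quad_form A v) \<ge> 0"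
  unfolding psd_def quad_form_def Let_def by blast

lemma quad_form_unit_vec:
  assumes "A \<in> carrier_mat d d" "i < d"
  shows "quad_form A (unit_vec d i) = A $$ (i, i)"
proof -
  have "quad_form A (unit_vec d i) = (\<Sum>p<d. \<Sum>q<d. if p = i \<and> q = i then A $$ (i, i) else 0)"
    using assms(1) unfolding quad_form_def by (intro sum.cong refl) (auto simp: unit_vec_def)
  also have "\<dots> = (\<Sum>p<d. if p = i then A $$ (i, i) else 0)"
    by (intro sum.cong refl) auto
  finally show ?thesis using assms(2) by simp
qed

lemma sum_two_deltas:
  fixes f :: "nat \<Rightarrow> complex"
  assumes "i < d" "j < d" "i \<noteq> j"
  shows "(\<Sum>k<d. f k * ((if k = i then a else 0) + (if k = j then b else 0))) = f i * a + f j * b"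
proof -
  have "(\<Sum>k<d. f k * ((if k = i then a else 0) + (if k = j then b else 0)))
      = (\<Sum>k<d. (if k = i then f i * a else 0)) + (\<Sum>k<d. (if k = j then f j * b else 0))"
    unfolding sum.distrib[symmetric] using assms by (intro sum.cong refl) auto
  then show ?thesis using assms by simp
qed

lemma quad_form_two_units:
  fixes a b :: complex
  assumes A: "A \<in> carrier_mat d d" and ij: "i < d" "j < d" "i \<noteq> j"
  shows "quad_form A (vec d (\<lambda>k. (if k = i then a else 0) + (if k = j then b else 0)))
    = cnj a * (A $$ (i, i) * a + A $$ (i, j) * b) + cnj b * (A $$ (j, i) * a + A $$ (j, j) * b)"
    (is "quad_form A ?v = _")
proof -
  have "quad_form A ?v
      = (\<Sum>p<d. cnj (?v $ p) * (\<Sum>q<d. A $$ (p, q) * ((if q = i then a else 0) + (if q = j then b else 0))))"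
    using A by (simp add: quad_form_def sum_distrib_left mult.assoc)
  also have "\<dots> = (\<Sum>p<d. (A $$ (p, i) * a + A $$ (p, j) * b)
      * ((if p = i then cnj a else 0) + (if p = j then cnj b else 0)))"
    by (intro sum.cong refl) (simp add: sum_two_deltas[OF ij] mult.commute)
  also have "\<dots> = cnj a * (A $$ (i, i) * a + A $$ (i, j) * b) + cnj b * (A $$ (j, i) * a + A $$ (j, j) * b)"
    by (simp add: sum_two_deltas[OF ij] mult.commute)
  finally show ?thesis .
qed

lemma psd_diag:
  assumes "psd A" "A \<in> carrier_mat d d" "i < d"
  shows "Im (A $$ (i, i)) = 0" and "Re (A $$ (i, i)) \<ge> 0"
  using psd_quad_form[OF assms(1), of "unit_vec d i"] assms(2,3) by (auto simp: quad_form_unit_vec)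

lemma psd_hermitian:
  assumes "psd A" "A \<in> carrier_mat d d" "i < d" "j < d"
  shows "A $$ (i, j) = cnj (A $$ (j, i))"
proof (cases "i = j")
  case True
  then show ?thesis using psd_diag[OF assms(1-3)] by (simp add: complex_eq_iff)
next
  case False
  have real: "Im (cnj a * (A $$ (i, i) * a + A $$ (i, j) * b) + cnj b * (A $$ (j, i) * a + A $$ (j, j) * b)) = 0"
    for a b
    using psd_quad_form[OF assms(1), of "vec d (\<lambda>k. (if k = i then a else 0) + (if k = j then b else 0))"] assms(2)
    by (simp add: quad_form_two_units[OF assms(2-4) False])
  have "Im (A $$ (i, i)) = 0" "Im (A $$ (j, j)) = 0" using psd_diag assms by auto
  then have "Im (A $$ (i, j)) + Im (A $$ (j, i)) = 0" "Re (A $$ (i, j)) - Re (A $$ (j, i)) = 0"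
    using real[of 1 1] real[of 1 \<i>] by (simp_all add: algebra_simps)
  then show ?thesis by (simp add: complex_eq_iff)
qed

lemma ampl_1:
  assumes "X \<in> carrier_mat d d" "F X \<in> carrier_mat d d"
  shows "ampl 1 d F X = F X"
proof -
  have "mat d d (\<lambda>(k, l). X $$ ((p div d) * d + k, (q div d) * d + l)) = X" if "p < d" "q < d" for p q
    using assms that by (intro eq_matI) auto
  then show ?thesis using assms by (intro eq_matI) (auto simp: ampl_def)
qed

lemma cptp_psd:
  assumes "cptp n F" "X \<in> carrier_mat (2^n) (2^n)" "psd X"
  shows "psd (F X)"
proof -
  have "F X \<in> carrier_mat (2^n) (2^n)" using assms by (simp add: cptp_def)
  then have "ampl 1 (2^n) F X = F X" using ampl_1 assms(2) by blast
  moreover have "psd (ampl 1 (2^n) F X)" using assms unfolding cptp_def by (metis mult_1)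
  ultimately show ?thesis by simp
qed

subsection \<open>Compositions of channels\<close>

lemma chain_id: "chain (\<lambda>_. id) r = id"
  by (induction r) auto

lemma chain_fixed: "\<forall>j<r. Es j G = G \<Longrightarrow> chain Es r G = G"
  by (induction r) auto

lemma chain_carrier:
  "\<forall>j<r. cptp n (Es j) \<Longrightarrow> X \<in> carrier_mat (2^n) (2^n) \<Longrightarrow> chain Es r X \<in> carrier_mat (2^n) (2^n)"
  by (induction r) (auto simp: cptp_def)

lemma chain_trace:
  "\<forall>j<r. cptp n (Es j) \<Longrightarrow> X \<in> carrier_mat (2^n) (2^n) \<Longrightarrow> trace (chain Es r X) = trace X"
  by (induction r) (auto simp: cptp_def chain_carrier)

lemma chain_psd:
  "\<forall>j<r. cptp n (Es j) \<Longrightarrow> X \<in> carrier_mat (2^n) (2^n) \<Longrightarrow> psd X \<Longrightarrow> psd (chain Es r X)"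
  by (induction r) (auto intro!: cptp_psd[of n _ "chain Es _ X"] chain_carrier)

lemma adj_chain_carrier:
  "\<forall>j<r. cptp n (Es j) \<Longrightarrow> Y \<in> carrier_mat (2^n) (2^n) \<Longrightarrow> adj_chain n Es r Y \<in> carrier_mat (2^n) (2^n)"
  by (induction r arbitrary: Y) (auto simp: hs_adjoint(1))

lemma trace_dagger_adj_chain:
  assumes "\<forall>j<r. cptp n (Es j)" "Y \<in> carrier_mat (2^n) (2^n)" "X \<in> carrier_mat (2^n) (2^n)"
  shows "trace (dagger (adj_chain n Es r Y) * X) = trace (dagger Y * chain Es r X)"
  using assms
proof (induction r arbitrary: Y)
  case (Suc r)
  have "cptp n (Es r)" using Suc.prems by auto
  then show ?case
    using Suc.IH[OF _ hs_adjoint(1)] hs_adjoint(2) chain_carrier Suc.prems by auto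
qed simp

subsection \<open>Erasure protocols and the hypothesis test they induce\<close>

text \<open>The work cost, in units of \<open>1/\<beta>\<close>, of resetting the qubits in W.\<close>

definition erasure_cost :: "real \<Rightarrow> (nat \<Rightarrow> real) \<Rightarrow> nat set \<Rightarrow> real" where
  "erasure_cost \<beta> E W = (\<Sum>i\<in>W. ln (Re (trace (gamma_q \<beta> (E i)))))"

definition success_prob ::
    "nat \<Rightarrow> (nat \<Rightarrow> complex mat \<Rightarrow> complex mat) \<Rightarrow> nat \<Rightarrow> nat set \<Rightarrow> complex mat \<Rightarrow> real" where
  "success_prob n Es r W \<rho> = Re ((resets n W \<circ> chain Es r) \<rho> $$ (0, 0))"

definition feasible ::
    "nat \<Rightarrow> (complex mat \<Rightarrow> complex mat) set \<Rightarrow> nat \<Rightarrow> real \<Rightarrow> complex mat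
      \<Rightarrow> (nat set \<times> (nat \<Rightarrow> complex mat \<Rightarrow> complex mat)) set" where
  "feasible n T r \<eta> \<rho> =
    {(W, Es). W \<subseteq> {..<n} \<and> (\<forall>j<r. Es j \<in> T) \<and> \<eta> \<le> success_prob n Es r W \<rho>}"

lemma exp_erasure_cost: "finite W \<Longrightarrow> exp (erasure_cost \<beta> E W) = (\<Prod>i\<in>W. 1 + exp (- \<beta> * E i))"
  by (simp add: erasure_cost_def exp_sum trace_gamma_q add_pos_pos)

lemma W_star_eq_Inf_feasible:
  "W_star n \<beta> E T r \<eta> \<rho> = Inf ((\<lambda>a. (1 / \<beta>) * erasure_cost \<beta> E (fst a)) ` feasible n T r \<eta> \<rho>)"
proof -
  let ?S = "{(1 / \<beta>) * erasure_cost \<beta> E W | W Es.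
    W \<subseteq> {..<n} \<and> (\<forall>j<r. Es j \<in> T) \<and> \<eta> \<le> success_prob n Es r W \<rho>}"
  have "?S = (\<lambda>a. (1 / \<beta>) * erasure_cost \<beta> E (fst a)) ` feasible n T r \<eta> \<rho>"
  proof (intro equalityI subsetI)
    fix x assume "x \<in> ?S"
    then obtain W Es where "x = (1 / \<beta>) * erasure_cost \<beta> E W" "(W, Es) \<in> feasible n T r \<eta> \<rho>"
      unfolding feasible_def by blast
    then show "x \<in> (\<lambda>a. (1 / \<beta>) * erasure_cost \<beta> E (fst a)) ` feasible n T r \<eta> \<rho>"
      by (intro image_eqI[of _ _ "(W, Es)"]) simp_all
  next
    fix x assume "x \<in> (\<lambda>a. (1 / \<beta>) * erasure_cost \<beta> E (fst a)) ` feasible n T r \<eta> \<rho>"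
    then obtain W Es where "(W, Es) \<in> feasible n T r \<eta> \<rho>" "x = (1 / \<beta>) * erasure_cost \<beta> E W" by auto
    then show "x \<in> ?S" unfolding feasible_def by blast
  qed
  then show ?thesis
    unfolding W_star_def erasure_cost_def[symmetric] success_prob_def[symmetric] by simp
qed

lemma trace_adj_chain_Gamma:
  assumes "\<forall>j<r. cptp n (Es j)" "\<forall>j<r. Es j (Gamma n \<beta> E) = Gamma n \<beta> E" "W \<subseteq> {..<n}"
  shows "Re (trace (adj_chain n Es r (proj_off n W) * Gamma n \<beta> E)) = exp (erasure_cost \<beta> E W)"
proof -
  have "trace (adj_chain n Es r (proj_off n W) * Gamma n \<beta> E)
      = cnj (trace (dagger (adj_chain n Es r (proj_off n W)) * Gamma n \<beta> E))"
    using trace_mult_hermitian[OF adj_chain_carrier[OF assms(1) proj_off_carrier] Gamma_carrier Gamma_hermitian] .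
  also have "\<dots> = cnj (trace (proj_off n W * Gamma n \<beta> E))"
    using assms by (simp add: trace_dagger_adj_chain proj_off_carrier Gamma_carrier chain_fixed proj_off_dagger)
  finally show ?thesis
    unfolding trace_proj_off_Gamma[OF assms(3)] exp_erasure_cost[OF finite_subset[OF assms(3) finite_lessThan]]
    by (simp only: complex_cnj_complex_of_real Re_complex_of_real)
qed

lemma trace_adj_chain_state:
  assumes "\<forall>j<r. cptp n (Es j)" "W \<subseteq> {..<n}" "is_state n \<rho>"
  shows "Re (trace (adj_chain n Es r (proj_off n W) * \<rho>)) = success_prob n Es r W \<rho>"
proof -
  have \<rho>: "\<rho> \<in> carrier_mat (2^n) (2^n)" "psd \<rho>" using assms(3) by (auto simp: is_state_def)
  have "trace (adj_chain n Es r (proj_off n W) * \<rho>)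
      = cnj (trace (dagger (adj_chain n Es r (proj_off n W)) * \<rho>))"
    using trace_mult_hermitian[OF adj_chain_carrier[OF assms(1) proj_off_carrier] \<rho>(1) psd_hermitian[OF \<rho>(2,1)]] .
  also have "\<dots> = cnj (trace (proj_off n W * chain Es r \<rho>))"
    using assms(1) \<rho> by (simp add: trace_dagger_adj_chain proj_off_carrier proj_off_dagger)
  finally show ?thesis
    using assms(1,2) \<rho> by (simp add: success_prob_def resets_00_eq_trace chain_carrier)
qed

lemma success_prob_le_1:
  assumes "\<forall>j<r. cptp n (Es j)" "W \<subseteq> {..<n}" "is_state n \<rho>"
  shows "success_prob n Es r W \<rho> \<le> 1"
proof -
  let ?\<sigma> = "chain Es r \<rho>"
  have \<rho>: "\<rho> \<in> carrier_mat (2^n) (2^n)" "psd \<rho>" "trace \<rho> = 1" using assms(3) by (auto simp: is_state_def)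
  have \<sigma>: "?\<sigma> \<in> carrier_mat (2^n) (2^n)" "psd ?\<sigma>" "trace ?\<sigma> = 1"
    using assms(1) \<rho> by (auto intro: chain_carrier chain_psd simp: chain_trace)
  have "success_prob n Es r W \<rho> = Re (\<Sum>k<2^n. of_bool (\<forall>i<n. i \<in> W \<or> qbit i k = 0) * ?\<sigma> $$ (k, k))"
    unfolding success_prob_def comp_apply resets_00_eq_trace[OF assms(2) \<sigma>(1)] trace_proj_off_mult[OF \<sigma>(1)] ..
  also have "\<dots> = (\<Sum>k<2^n. Re (of_bool (\<forall>i<n. i \<in> W \<or> qbit i k = 0) * ?\<sigma> $$ (k, k)))"
    by (rule Re_sum)
  also have "\<dots> \<le> (\<Sum>k<2^n. Re (?\<sigma> $$ (k, k)))"
    using psd_diag(2)[OF \<sigma>(2,1)] by (intro sum_mono) (auto simp: of_bool_def)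
  also have "\<dots> = Re (trace ?\<sigma>)" using \<sigma>(1) by (simp add: trace_def)
  also have "\<dots> = 1" using \<sigma>(3) by simp
  finally show ?thesis .
qed

lemma success_prob_reset_all:
  assumes "is_state n \<rho>"
  shows "success_prob n (\<lambda>_. id) r {..<n} \<rho> = 1"
proof -
  have \<rho>: "\<rho> \<in> carrier_mat (2^n) (2^n)" "trace \<rho> = 1" using assms by (auto simp: is_state_def)
  have "trace (proj_off n {..<n} * \<rho>) = trace \<rho>"
    using \<rho>(1) by (simp add: trace_proj_off_mult) (simp add: trace_def)
  then show ?thesis using \<rho> by (simp add: success_prob_def chain_id resets_00_eq_trace)
qed

lemma finite_erasure_costs_feasible:
  "finite ((\<lambda>a. erasure_cost \<beta> E (fst a)) ` feasible n T r \<eta> \<rho>)"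
  by (rule finite_subset[of _ "erasure_cost \<beta> E ` Pow {..<n}"]) (auto simp: feasible_def)

lemma feasible_nonempty:
  assumes "id \<in> T" "is_state n \<rho>" "\<eta> \<le> 1"
  shows "feasible n T r \<eta> \<rho> \<noteq> {}"
proof -
  have "({..<n}, \<lambda>_. id) \<in> feasible n T r \<eta> \<rho>"
    using assms success_prob_reset_all[OF assms(2)] by (simp add: feasible_def)
  then show ?thesis by blast
qed

lemma feasible_success_prob:
  assumes "\<forall>F\<in>T. cptp n F" "is_state n \<rho>" "(W, Es) \<in> feasible n T r \<eta> \<rho>"
  shows "\<eta> \<le> success_prob n Es r W \<rho>" and "success_prob n Es r W \<rho> \<le> 1"
  using assms by (auto simp: feasible_def intro: success_prob_le_1)

lemma Mr_eq: "Mr n T r = {adj_chain n Es r (proj_off n W) | Es W. (\<forall>j<r. Es j \<in> T) \<and> W \<subseteq> {..<n}}"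
  unfolding Mr_def P0_eq_proj_off by blast

lemma Mr_objectives:
  assumes "\<forall>F\<in>T. cptp n F \<and> F (Gamma n \<beta> E) = Gamma n \<beta> E" "is_state n \<rho>"
  shows "{f (Re (trace (Q * Gamma n \<beta> E))) (Re (trace (Q * \<rho>))) | Q. Q \<in> Mr n T r \<and> \<eta> \<le> Re (trace (Q * \<rho>))}
    = (\<lambda>a. f (exp (erasure_cost \<beta> E (fst a))) (success_prob n (snd a) r (fst a) \<rho>)) ` feasible n T r \<eta> \<rho>"
    (is "?S = ?g ` _")
proof -
  have Gamma: "Re (trace (adj_chain n Es r (proj_off n W) * Gamma n \<beta> E)) = exp (erasure_cost \<beta> E W)"
    and state: "Re (trace (adj_chain n Es r (proj_off n W) * \<rho>)) = success_prob n Es r W \<rho>"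
    if "\<forall>j<r. Es j \<in> T" "W \<subseteq> {..<n}" for Es W
    using that assms by (simp_all add: trace_adj_chain_Gamma trace_adj_chain_state)
  show ?thesis
  proof (intro equalityI subsetI)
    fix x assume "x \<in> ?S"
    then obtain Es W where "\<forall>j<r. Es j \<in> T" "W \<subseteq> {..<n}"
      and "x = f (Re (trace (adj_chain n Es r (proj_off n W) * Gamma n \<beta> E)))
        (Re (trace (adj_chain n Es r (proj_off n W) * \<rho>)))"
      and "\<eta> \<le> Re (trace (adj_chain n Es r (proj_off n W) * \<rho>))"
      unfolding Mr_eq by blast
    then show "x \<in> ?g ` feasible n T r \<eta> \<rho>"
      by (intro image_eqI[of _ _ "(W, Es)"]) (simp_all add: Gamma state feasible_def)
  next
    fix x assume "x \<in> ?g ` feasible n T r \<eta> \<rho>"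
    then obtain W Es where feasible: "\<forall>j<r. Es j \<in> T" "W \<subseteq> {..<n}" "\<eta> \<le> success_prob n Es r W \<rho>"
      and x: "x = ?g (W, Es)"
      unfolding feasible_def by blast
    have "adj_chain n Es r (proj_off n W) \<in> Mr n T r" unfolding Mr_eq using feasible by blast
    then show "x \<in> ?S"
      using feasible x by (intro CollectI exI[of _ "adj_chain n Es r (proj_off n W)"]) (simp add: Gamma state)
  qed
qed

subsection \<open>Infima over finitely many costs\<close>

lemma cInf_mono_image_eq_Min:
  fixes f :: "'a::linorder \<Rightarrow> 'b::conditionally_complete_linorder"
  assumes "mono f" "finite S" "S \<noteq> {}"
  shows "Inf (f ` S) = f (Min S)"
  using assms by (simp add: cInf_eq_Min mono_Min_commute)

lemma ln_Inf_ratio_bounds: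
  fixes c p :: "'a \<Rightarrow> real"
  assumes "finite (c ` A)" "A \<noteq> {}" "\<forall>a\<in>A. \<eta> \<le> p a \<and> p a \<le> 1" "0 < \<eta>"
  shows "Min (c ` A) \<le> ln (Inf ((\<lambda>a. exp (c a) / p a) ` A))"
    and "ln (Inf ((\<lambda>a. exp (c a) / p a) ` A)) \<le> Min (c ` A) + ln (1 / \<eta>)"
proof -
  let ?m = "Min (c ` A)" and ?I = "Inf ((\<lambda>a. exp (c a) / p a) ` A)"
  have lower: "exp ?m \<le> exp (c a) / p a" if "a \<in> A" for a
  proof -
    have p: "\<eta> \<le> p a" "p a \<le> 1" using assms(3) that by auto
    have "exp ?m \<le> exp (c a)" using assms(1) that by simp
    also have "\<dots> \<le> exp (c a) / p a"
      using p assms(4) mult_left_le[of "p a" "exp (c a)"] by (simp add: le_divide_eq)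
    finally show ?thesis .
  qed
  then have "exp ?m \<le> ?I" using assms(2) by (intro cInf_greatest) auto
  moreover from this have I_pos: "0 < ?I" by (rule less_le_trans[OF exp_gt_zero])
  ultimately show "?m \<le> ln ?I" by (metis exp_gt_zero ln_exp ln_le_cancel_iff)
  have "?m \<in> c ` A" using Min_in[OF assms(1)] assms(2) by simp
  then obtain a0 where a0: "a0 \<in> A" "c a0 = ?m" by (metis imageE)
  have "?I \<le> exp ?m / p a0"
    using a0 lower by (intro cInf_lower) (auto simp flip: a0(2) intro!: bdd_belowI[of _ "exp ?m"])
  also have "\<dots> \<le> exp ?m / \<eta>" using assms(3,4) a0(1) by (intro divide_left_mono) auto
  finally have "ln ?I \<le> ln (exp ?m / \<eta>)"
    using I_pos assms(4) by (subst ln_le_cancel_iff) auto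
  then show "ln ?I \<le> ?m + ln (1 / \<eta>)" using assms(4) by (simp add: ln_div)
qed

theorem theoremE1:
  fixes n r :: nat and \<beta> \<eta> :: real and E :: "nat \<Rightarrow> real"
    and T :: "(complex mat \<Rightarrow> complex mat) set" and \<rho> :: "complex mat"
  assumes "\<forall>i<n. E i \<ge> 0"
    and "\<beta> > 0"
    and "id \<in> T"
    and "\<forall>F\<in>T. cptp n F \<and> F (Gamma n \<beta> E) = Gamma n \<beta> E"
    and "is_state n \<rho>"
    and "0 < \<eta>" and "\<eta> \<le> 1"
  shows "\<beta> * W_star n \<beta> E T r \<eta> \<rho> = - D_h n T r \<eta> \<rho> (Gamma n \<beta> E)
    \<and> - D_H n T r \<eta> \<rho> (Gamma n \<beta> E) - ln (1 / \<eta>) \<le> \<beta> * W_star n \<beta> E T r \<eta> \<rho>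
    \<and> \<beta> * W_star n \<beta> E T r \<eta> \<rho> \<le> - D_H n T r \<eta> \<rho> (Gamma n \<beta> E)"
proof -
  let ?A = "feasible n T r \<eta> \<rho>"
  let ?c = "\<lambda>a. erasure_cost \<beta> E (fst a)" and ?p = "\<lambda>a. success_prob n (snd a) r (fst a) \<rho>"
  note finite = finite_erasure_costs_feasible[of \<beta> E n T r \<eta> \<rho>]
  note nonempty = feasible_nonempty[OF assms(3,5,7), of r]
  have prob: "\<forall>a\<in>?A. \<eta> \<le> ?p a \<and> ?p a \<le> 1"
    using assms(4,5) feasible_success_prob by fastforce
  have mono_scale: "mono (\<lambda>x::real. (1 / \<beta>) * x)"
    using assms(2) by (intro monoI) (simp add: divide_right_mono)
  have "W_star n \<beta> E T r \<eta> \<rho> = Inf ((\<lambda>x. (1 / \<beta>) * x) ` ?c ` ?A)"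
    by (simp add: W_star_eq_Inf_feasible image_image)
  also have "\<dots> = (1 / \<beta>) * Min (?c ` ?A)"
    using finite nonempty by (intro cInf_mono_image_eq_Min[OF mono_scale]) auto
  finally have "\<beta> * W_star n \<beta> E T r \<eta> \<rho> = Min (?c ` ?A)" using assms(2) by simp
  moreover have "Inf (exp ` ?c ` ?A) = exp (Min (?c ` ?A))"
    using finite nonempty by (intro cInf_mono_image_eq_Min monoI) auto
  then have "D_h n T r \<eta> \<rho> (Gamma n \<beta> E) = - Min (?c ` ?A)"
    using Mr_objectives[OF assms(4,5), where f = "\<lambda>x y. x"] by (simp add: D_h_def image_image)
  moreover have "- D_H n T r \<eta> \<rho> (Gamma n \<beta> E) = ln (Inf ((\<lambda>a. exp (?c a) / ?p a) ` ?A))"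
    using Mr_objectives[OF assms(4,5), where f = "\<lambda>x y. x / y"] by (simp add: D_H_def)
  ultimately show ?thesis
    using ln_Inf_ratio_bounds[OF finite nonempty prob assms(6)] by linarith
qed

end
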